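(* If $X$ is a core compact well-filtered space, then the upper Vietoris topology and the Scott topology on $\mathsf{K}(X)$ coincide.
   Context: Spaces are $T_0$; specialization order $x\le y$ iff $x\in\overline{\{y\}}$; saturated = upper set. $\mathsf{K}(X)$ = nonempty compact saturated subsets ordered by reverse inclusion. Scott topology on a poset: upper sets $U$ such that every directed $D$ whose supremum exists and lies in $U$ meets $U$. Upper Vietoris topology on $\mathsf{K}(X)$: base $\Box U=\{K:K\subseteq U\}$, $U$ open. Well-filtered: for open $U$ and $\mathcal K\subseteq\mathsf{K}(X)$ filtered under inclusion, $\bigcap\mathcal K\subseteq U$ implies some $K\in\mathcal K$ lies in $U$. Core compact: the lattice of open sets of $X$ is a continuous lattice. *)

theory Defs
  imports "HOL-Analysis.Analysis"
begin

definition spec_le :: "'a topology \<Rightarrow> 'a \<Rightarrow> 'a \<Rightarrow> bool" where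
  "spec_le X x y \<longleftrightarrow> x \<in> X closure_of {y}"

definition saturated :: "'a topology \<Rightarrow> 'a set \<Rightarrow> bool" where
  "saturated X A \<longleftrightarrow> A \<subseteq> topspace X \<and>
     (\<forall>x\<in>A. \<forall>y\<in>topspace X. spec_le X x y \<longrightarrow> y \<in> A)"

definition KX :: "'a topology \<Rightarrow> 'a set set" where
  "KX X = {K. K \<noteq> {} \<and> compactin X K \<and> saturated X K}"

definition K_le :: "'a set \<Rightarrow> 'a set \<Rightarrow> bool" where
  "K_le K1 K2 \<longleftrightarrow> K2 \<subseteq> K1"

definition directed_in :: "'b set \<Rightarrow> ('b \<Rightarrow> 'b \<Rightarrow> bool) \<Rightarrow> 'b set \<Rightarrow> bool" where
  "directed_in P le D \<longleftrightarrow> D \<subseteq> P \<and> D \<noteq> {} \<and>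
     (\<forall>a\<in>D. \<forall>b\<in>D. \<exists>c\<in>D. le a c \<and> le b c)"

definition is_sup_in :: "'b set \<Rightarrow> ('b \<Rightarrow> 'b \<Rightarrow> bool) \<Rightarrow> 'b set \<Rightarrow> 'b \<Rightarrow> bool" where
  "is_sup_in P le D s \<longleftrightarrow> s \<in> P \<and> (\<forall>d\<in>D. le d s) \<and>
     (\<forall>u\<in>P. (\<forall>d\<in>D. le d u) \<longrightarrow> le s u)"

definition scott_open :: "'b set \<Rightarrow> ('b \<Rightarrow> 'b \<Rightarrow> bool) \<Rightarrow> 'b set \<Rightarrow> bool" where
  "scott_open P le U \<longleftrightarrow> U \<subseteq> P \<and>
     (\<forall>x\<in>U. \<forall>y\<in>P. le x y \<longrightarrow> y \<in> U) \<and>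
     (\<forall>D s. directed_in P le D \<and> is_sup_in P le D s \<and> s \<in> U \<longrightarrow> D \<inter> U \<noteq> {})"

definition Box :: "'a topology \<Rightarrow> 'a set \<Rightarrow> 'a set set" where
  "Box X U = {K \<in> KX X. K \<subseteq> U}"

definition upper_vietoris_open :: "'a topology \<Rightarrow> 'a set set \<Rightarrow> bool" where
  "upper_vietoris_open X W \<longleftrightarrow>
     (\<exists>\<B>. \<B> \<subseteq> {Box X U | U. openin X U} \<and> W = \<Union>\<B>)"

definition filtered_incl :: "'a set set \<Rightarrow> bool" where
  "filtered_incl \<K> \<longleftrightarrow> \<K> \<noteq> {} \<and> (\<forall>A\<in>\<K>. \<forall>B\<in>\<K>. \<exists>C\<in>\<K>. C \<subseteq> A \<and> C \<subseteq> B)"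

definition well_filtered :: "'a topology \<Rightarrow> bool" where
  "well_filtered X \<longleftrightarrow>
     (\<forall>U \<K>. openin X U \<and> \<K> \<subseteq> KX X \<and> filtered_incl \<K> \<and> \<Inter>\<K> \<subseteq> U
        \<longrightarrow> (\<exists>K\<in>\<K>. K \<subseteq> U))"

text \<open>Core compactness: the lattice of open sets (ordered by inclusion) is continuous.\<close>
definition opens_of :: "'a topology \<Rightarrow> 'a set set" where
  "opens_of X = {U. openin X U}"

definition way_below_open :: "'a topology \<Rightarrow> 'a set \<Rightarrow> 'a set \<Rightarrow> bool" where
  "way_below_open X U V \<longleftrightarrow>
     (\<forall>D. directed_in (opens_of X) (\<subseteq>) D \<and> V \<subseteq> \<Union>D \<longrightarrow> (\<exists>W\<in>D. U \<subseteq> W))"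

definition core_compact :: "'a topology \<Rightarrow> bool" where
  "core_compact X \<longleftrightarrow>
     (\<forall>V. openin X V \<longrightarrow>
        directed_in (opens_of X) (\<subseteq>) {U. openin X U \<and> way_below_open X U V} \<and>
        V = \<Union>{U. openin X U \<and> way_below_open X U V})"

end

theory Submission
  imports Defs
begin

text \<open>
  Upper Vietoris open sets are Scott open because, in a well-filtered space, the supremum of a
  directed family in K(X) is its intersection, and a filtered intersection inside an open U
  forces a member inside U. For the converse, every K in K(X) must be the directed supremum of
  compact saturated sets Q with K \<subseteq> P \<subseteq> Q \<subseteq> V for an open P and any prescribed open V \<supseteq> K.
  Core compactness gives an open P \<supseteq> K and, by interpolation, a chain
  V = U 0 \<supseteq> U 1 \<supseteq> \<dots> with each U(n+1) way below U n and P way below all of them; then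
  Q = \<Inter>(range U) is saturated. It is compact because in a well-filtered space every open G \<supseteq> Q
  contains some U n: otherwise enlarge G to an open M maximal among those containing no U n
  (Zorn), pick a n \<in> U n - M, and the upper closures of the tails {a m | m \<ge> n} form a filtered
  family in K(X) with intersection inside G although no member lies inside M.
\<close>

section \<open>Saturated sets and upper closures\<close>

lemma spec_le_refl: "x \<in> topspace X \<Longrightarrow> spec_le X x x"
  unfolding spec_le_def by (meson closure_of_subset empty_subsetI insert_subset)

lemma spec_le_trans: "spec_le X x y \<Longrightarrow> spec_le X y z \<Longrightarrow> spec_le X x z"
  unfolding spec_le_def in_closure_of by blast

lemma spec_le_openin: "spec_le X x y \<Longrightarrow> openin X U \<Longrightarrow> x \<in> U \<Longrightarrow> y \<in> U"
  unfolding spec_le_def in_closure_of by blast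

lemma saturated_openin: "openin X U \<Longrightarrow> saturated X U"
  unfolding saturated_def by (meson openin_subset spec_le_openin)

lemma saturated_Inter:
  assumes "\<S> \<noteq> {}" "\<And>S. S \<in> \<S> \<Longrightarrow> saturated X S"
  shows "saturated X (\<Inter>\<S>)"
  using assms unfolding saturated_def by (metis InterE InterI Inter_lower all_not_in_conv order_trans)

lemma saturated_subset_closure_compl:
  assumes "saturated X K" "x \<in> topspace X" "x \<notin> K"
  shows "K \<subseteq> topspace X - X closure_of {x}"
  using assms unfolding saturated_def spec_le_def by blast

definition upclosure :: "'a topology \<Rightarrow> 'a set \<Rightarrow> 'a set" where
  "upclosure X S = {y \<in> topspace X. \<exists>x\<in>S. spec_le X x y}"

lemma subset_upclosure: "S \<subseteq> topspace X \<Longrightarrow> S \<subseteq> upclosure X S"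
  unfolding upclosure_def using spec_le_refl by fastforce

lemma saturated_upclosure: "saturated X (upclosure X S)"
  unfolding saturated_def upclosure_def by (blast intro: spec_le_trans)

lemma upclosure_subset_openin: "openin X U \<Longrightarrow> S \<subseteq> U \<Longrightarrow> upclosure X S \<subseteq> U"
  unfolding upclosure_def by (blast intro: spec_le_openin)

lemma compactin_upclosure:
  assumes "S \<subseteq> topspace X"
    and cover: "\<And>\<U>. (\<And>U. U \<in> \<U> \<Longrightarrow> openin X U) \<Longrightarrow> S \<subseteq> \<Union>\<U> \<Longrightarrow>
                  \<exists>\<F>. finite \<F> \<and> \<F> \<subseteq> \<U> \<and> S \<subseteq> \<Union>\<F>"
  shows "compactin X (upclosure X S)"
  unfolding compactin_def
proof (intro conjI allI impI)
  show "upclosure X S \<subseteq> topspace X" unfolding upclosure_def by blast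
  fix \<U> assume \<U>: "(\<forall>U\<in>\<U>. openin X U) \<and> upclosure X S \<subseteq> \<Union>\<U>"
  then have "S \<subseteq> \<Union>\<U>" using subset_upclosure[OF assms(1)] by (meson order_trans)
  then obtain \<F> where \<F>: "finite \<F>" "\<F> \<subseteq> \<U>" "S \<subseteq> \<Union>\<F>" using cover \<U> by meson
  then have "openin X (\<Union>\<F>)" using \<U> by auto
  then have "upclosure X S \<subseteq> \<Union>\<F>" using \<F>(3) by (rule upclosure_subset_openin)
  then show "\<exists>\<F>. finite \<F> \<and> \<F> \<subseteq> \<U> \<and> upclosure X S \<subseteq> \<Union>\<F>" using \<F> by blast
qed

section \<open>The way-below relation on open sets\<close>

lemma directed_in_nonempty: "directed_in P le D \<Longrightarrow> D \<noteq> {}"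
  unfolding directed_in_def by simp

lemma directed_in_upper_bound:
  "directed_in P le D \<Longrightarrow> a \<in> D \<Longrightarrow> b \<in> D \<Longrightarrow> \<exists>c\<in>D. le a c \<and> le b c"
  unfolding directed_in_def by simp

lemma way_below_openD:
  "way_below_open X P V \<Longrightarrow> directed_in (opens_of X) (\<subseteq>) D \<Longrightarrow> V \<subseteq> \<Union>D \<Longrightarrow> \<exists>W\<in>D. P \<subseteq> W"
  unfolding way_below_open_def by simp

lemma way_below_open_subset:
  assumes "openin X V" "way_below_open X P V"
  shows "P \<subseteq> V"
proof -
  have "directed_in (opens_of X) (\<subseteq>) {V}"
    using assms(1) unfolding directed_in_def opens_of_def by simp
  then show ?thesis
    using assms(2) unfolding way_below_open_def by auto
qed

lemma way_below_open_mono: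
  "way_below_open X P V \<Longrightarrow> P' \<subseteq> P \<Longrightarrow> V \<subseteq> V' \<Longrightarrow> way_below_open X P' V'"
  unfolding way_below_open_def by (meson order_trans)

lemma way_below_open_empty: "way_below_open X {} V"
  unfolding way_below_open_def directed_in_def by auto

lemma way_below_open_Un:
  assumes "way_below_open X P1 V" "way_below_open X P2 V"
  shows "way_below_open X (P1 \<union> P2) V"
  unfolding way_below_open_def
proof (intro allI impI)
  fix D assume D: "directed_in (opens_of X) (\<subseteq>) D \<and> V \<subseteq> \<Union>D"
  then obtain W1 W2 where "W1 \<in> D" "P1 \<subseteq> W1" "W2 \<in> D" "P2 \<subseteq> W2"
    using assms unfolding way_below_open_def by meson
  moreover obtain W where "W \<in> D" "W1 \<subseteq> W" "W2 \<subseteq> W"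
    using D \<open>W1 \<in> D\<close> \<open>W2 \<in> D\<close> unfolding directed_in_def by meson
  ultimately show "\<exists>W\<in>D. P1 \<union> P2 \<subseteq> W" by blast
qed

lemma way_below_open_Union:
  "finite \<F> \<Longrightarrow> (\<And>P. P \<in> \<F> \<Longrightarrow> way_below_open X P V) \<Longrightarrow> way_below_open X (\<Union>\<F>) V"
  by (induction \<F> rule: finite_induct) (auto intro: way_below_open_empty way_below_open_Un)

lemma directed_finite_Unions:
  assumes "\<And>U. U \<in> \<U> \<Longrightarrow> openin X U"
  shows "directed_in (opens_of X) (\<subseteq>) {\<Union>\<F> | \<F>. finite \<F> \<and> \<F> \<subseteq> \<U>}" (is "directed_in _ _ ?D")
  unfolding directed_in_def opens_of_def
proof (intro conjI ballI subsetI)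
  fix A B assume "A \<in> ?D" "B \<in> ?D"
  then obtain \<F>1 \<F>2 where "A = \<Union>\<F>1" "finite \<F>1" "\<F>1 \<subseteq> \<U>" "B = \<Union>\<F>2" "finite \<F>2" "\<F>2 \<subseteq> \<U>"
    by auto
  then have "A \<union> B = \<Union>(\<F>1 \<union> \<F>2) \<and> finite (\<F>1 \<union> \<F>2) \<and> \<F>1 \<union> \<F>2 \<subseteq> \<U>" by auto
  then have "A \<union> B \<in> ?D" by (intro CollectI exI)
  then show "\<exists>C\<in>?D. A \<subseteq> C \<and> B \<subseteq> C" by auto
next
  fix W assume "W \<in> ?D"
  then obtain \<F> where "W = \<Union>\<F>" "\<F> \<subseteq> \<U>" by auto
  then show "W \<in> {U. openin X U}" using assms by auto
next
  have "{} = \<Union>{} \<and> finite {} \<and> {} \<subseteq> \<U>" by simp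
  then have "{} \<in> ?D" by (intro CollectI exI)
  then show "?D \<noteq> {}" by auto
qed

lemma way_below_open_finite_subcover:
  assumes "way_below_open X P V" "\<And>U. U \<in> \<U> \<Longrightarrow> openin X U" "V \<subseteq> \<Union>\<U>"
  obtains \<F> where "finite \<F>" "\<F> \<subseteq> \<U>" "P \<subseteq> \<Union>\<F>"
proof -
  let ?D = "{\<Union>\<F> | \<F>. finite \<F> \<and> \<F> \<subseteq> \<U>}"
  have "V \<subseteq> \<Union>?D"
  proof
    fix x assume "x \<in> V"
    then obtain U where U: "U \<in> \<U>" "x \<in> U" using assms(3) by blast
    have "U \<in> ?D" by (intro CollectI exI[of _ "{U}"]) (simp add: U(1))
    then show "x \<in> \<Union>?D" using U(2) by (rule UnionI)
  qed
  with assms(1) directed_finite_Unions[OF assms(2)] have "\<exists>W\<in>?D. P \<subseteq> W"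
    by (rule way_below_openD)
  then obtain \<F> where "finite \<F>" "\<F> \<subseteq> \<U>" "P \<subseteq> \<Union>\<F>" by auto
  then show thesis by (rule that)
qed

lemma core_compact_directed:
  assumes "core_compact X" "openin X V"
  shows "directed_in (opens_of X) (\<subseteq>) {U. openin X U \<and> way_below_open X U V}"
  using assms(1)[unfolded core_compact_def, rule_format, OF assms(2)] by (rule conjunct1)

lemma core_compact_cover:
  assumes "core_compact X" "openin X V" "x \<in> V"
  obtains U where "openin X U" "way_below_open X U V" "x \<in> U"
proof -
  have "V = \<Union>{U. openin X U \<and> way_below_open X U V}"
    using assms(1)[unfolded core_compact_def, rule_format, OF assms(2)] by (rule conjunct2)
  then have "x \<in> \<Union>{U. openin X U \<and> way_below_open X U V}"
    using assms(3) by (rule equalityD1[THEN subsetD])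
  then show thesis using that by blast
qed

lemma core_compact_compactin_way_below:
  assumes "core_compact X" "compactin X K" "openin X V" "K \<subseteq> V"
  obtains P where "openin X P" "K \<subseteq> P" "way_below_open X P V"
proof -
  let ?W = "{U. openin X U \<and> way_below_open X U V}"
  have "K \<subseteq> \<Union>?W"
  proof
    fix x assume "x \<in> K"
    then obtain U where "openin X U" "way_below_open X U V" "x \<in> U"
      using assms(4) core_compact_cover[OF assms(1,3)] by blast
    then show "x \<in> \<Union>?W" by blast
  qed
  then obtain \<F> where "finite \<F>" "\<F> \<subseteq> ?W" "K \<subseteq> \<Union>\<F>"
    using compactinD[OF assms(2), of ?W] by blast
  moreover from this have "openin X (\<Union>\<F>)" "way_below_open X (\<Union>\<F>) V"
    by (auto intro: way_below_open_Union)
  ultimately show thesis using that by blast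
qed

lemma core_compact_way_below_interpolate:
  assumes cc: "core_compact X" and "openin X V" "way_below_open X P V"
  obtains W where "openin X W" "way_below_open X P W" "way_below_open X W V"
proof -
  let ?W = "{U. openin X U \<and> way_below_open X U V}"
  let ?D = "{W'. openin X W' \<and> (\<exists>W\<in>?W. way_below_open X W' W)}"
  have dir: "directed_in (opens_of X) (\<subseteq>) ?W"
    using core_compact_directed[OF cc \<open>openin X V\<close>] .
  have "directed_in (opens_of X) (\<subseteq>) ?D"
    unfolding directed_in_def
  proof (intro conjI ballI)
    show "?D \<subseteq> opens_of X" by (auto simp: opens_of_def)
    obtain W0 where "W0 \<in> ?W" using directed_in_nonempty[OF dir] by blast
    then have "{} \<in> ?D" using way_below_open_empty by auto
    then show "?D \<noteq> {}" by blast
  next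
    fix A B assume "A \<in> ?D" "B \<in> ?D"
    then obtain W1 W2 where W12: "W1 \<in> ?W" "way_below_open X A W1" "W2 \<in> ?W" "way_below_open X B W2"
      by blast
    then obtain W3 where W3: "W3 \<in> ?W" "W1 \<subseteq> W3" "W2 \<subseteq> W3"
      using directed_in_upper_bound[OF dir] by blast
    have "way_below_open X (A \<union> B) W3"
      using W12 W3 by (blast intro: way_below_open_Un way_below_open_mono)
    then have "A \<union> B \<in> ?D" using \<open>A \<in> ?D\<close> \<open>B \<in> ?D\<close> W3(1) by blast
    then show "\<exists>C\<in>?D. A \<subseteq> C \<and> B \<subseteq> C" by blast
  qed
  moreover have "V \<subseteq> \<Union>?D"
  proof
    fix x assume "x \<in> V"
    then obtain W where W: "openin X W" "way_below_open X W V" "x \<in> W"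
      using core_compact_cover[OF cc \<open>openin X V\<close>] by blast
    then obtain W' where "openin X W'" "way_below_open X W' W" "x \<in> W'"
      using core_compact_cover[OF cc] by blast
    then show "x \<in> \<Union>?D" using W by blast
  qed
  ultimately have "\<exists>W'\<in>?D. P \<subseteq> W'"
    by (rule way_below_openD[OF assms(3)])
  then obtain W W' where "openin X W" "way_below_open X W V" "way_below_open X W' W" "P \<subseteq> W'"
    by blast
  then show thesis using that way_below_open_mono by blast
qed

definition way_below_chain :: "'a topology \<Rightarrow> (nat \<Rightarrow> 'a set) \<Rightarrow> bool" where
  "way_below_chain X U \<longleftrightarrow> (\<forall>n. openin X (U n) \<and> way_below_open X (U (Suc n)) (U n))"

lemma way_below_chain_openin: "way_below_chain X U \<Longrightarrow> openin X (U n)"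
  unfolding way_below_chain_def by simp

lemma way_below_chain_way_below: "way_below_chain X U \<Longrightarrow> way_below_open X (U (Suc n)) (U n)"
  unfolding way_below_chain_def by simp

lemma way_below_chain_antimono:
  assumes "way_below_chain X U" "m \<le> n"
  shows "U n \<subseteq> U m"
proof -
  have "U (Suc k) \<subseteq> U k" for k
    using way_below_chain_openin[OF assms(1)] way_below_chain_way_below[OF assms(1)]
    by (rule way_below_open_subset)
  then show ?thesis by (rule lift_Suc_antimono_le[OF _ assms(2)])
qed

lemma core_compact_way_below_chain:
  assumes "core_compact X" "openin X V" "way_below_open X P V"
  obtains U where "way_below_chain X U" "U 0 = V" "\<And>n. way_below_open X P (U n)"
proof -
  let ?R = "\<lambda>n W. openin X W \<and> way_below_open X P W \<and> (n = 0 \<longrightarrow> W = V)"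
  have step: "\<exists>W'. ?R (Suc n) W' \<and> way_below_open X W' W" if R: "?R n W" for n W
  proof -
    from R have "openin X W" "way_below_open X P W" by simp_all
    then obtain W' where "openin X W'" "way_below_open X P W'" "way_below_open X W' W"
      by (rule core_compact_way_below_interpolate[OF assms(1)])
    then show ?thesis by auto
  qed
  have "\<exists>W. ?R 0 W" using assms(2,3) by simp
  from dependent_nat_choice[of ?R, OF this step]
  obtain U where U: "\<forall>n. ?R n (U n) \<and> way_below_open X (U (Suc n)) (U n)" ..
  show thesis
  proof (rule that)
    show "way_below_chain X U" using U unfolding way_below_chain_def by blast
    show "U 0 = V" using U by blast
    show "way_below_open X P (U n)" for n using U by blast
  qed
qed

section \<open>Compactness from well-filteredness\<close>

lemma well_filteredD:
  "well_filtered X \<Longrightarrow> openin X U \<Longrightarrow> \<K> \<subseteq> KX X \<Longrightarrow> filtered_incl \<K> \<Longrightarrow> \<Inter>\<K> \<subseteq> U \<Longrightarrow>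
     \<exists>K\<in>\<K>. K \<subseteq> U"
  unfolding well_filtered_def by simp

lemma way_below_chain_not_subset_Union_chain:
  assumes chain: "way_below_chain X U" and "C \<noteq> {}"
    and C: "\<And>W. W \<in> C \<Longrightarrow> openin X W \<and> (\<forall>n. \<not> U n \<subseteq> W)"
    and ch: "\<And>A B. A \<in> C \<Longrightarrow> B \<in> C \<Longrightarrow> A \<subseteq> B \<or> B \<subseteq> A"
  shows "\<not> U n \<subseteq> \<Union>C"
proof
  assume "U n \<subseteq> \<Union>C"
  then obtain \<F> where \<F>: "finite \<F>" "\<F> \<subseteq> C" "U (Suc n) \<subseteq> \<Union>\<F>"
    using way_below_open_finite_subcover[OF way_below_chain_way_below[OF chain]] C by metis
  obtain W where "W \<in> C" "\<Union>\<F> \<subseteq> W"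
  proof (cases "\<F> = {}")
    case True
    then show thesis using \<open>C \<noteq> {}\<close> that by auto
  next
    case False
    have "subset.chain C \<F>" using \<F>(2) ch unfolding subset.chain_def by auto
    then have "\<Union>\<F> \<in> \<F>" using Union_in_chain \<F>(1) False by auto
    then show thesis using \<F>(2) that by auto
  qed
  then have "U (Suc n) \<subseteq> W" using \<F>(3) by auto
  then show False using C[OF \<open>W \<in> C\<close>] by blast
qed

lemma way_below_chain_maximal_open:
  assumes chain: "way_below_chain X U" and "openin X G" "\<And>n. \<not> U n \<subseteq> G"
  obtains M where "openin X M" "G \<subseteq> M" "\<And>n. \<not> U n \<subseteq> M"
    "\<And>W. openin X W \<Longrightarrow> \<not> W \<subseteq> M \<Longrightarrow> \<exists>k. U k \<subseteq> M \<union> W"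
proof -
  let ?A = "{W. openin X W \<and> G \<subseteq> W \<and> (\<forall>n. \<not> U n \<subseteq> W)}"
  have "\<exists>M\<in>?A. \<forall>Y\<in>?A. M \<subseteq> Y \<longrightarrow> Y = M"
  proof (rule subset_Zorn_nonempty)
    show "?A \<noteq> {}" using assms(2,3) by auto
    fix C assume "C \<noteq> {}" and "subset.chain ?A C"
    then have C: "C \<subseteq> ?A" and ch: "\<And>A B. A \<in> C \<Longrightarrow> B \<in> C \<Longrightarrow> A \<subseteq> B \<or> B \<subseteq> A"
      unfolding subset.chain_def by auto
    have "\<not> U n \<subseteq> \<Union>C" for n
      using way_below_chain_not_subset_Union_chain[OF chain \<open>C \<noteq> {}\<close> _ ch] C by blast
    moreover have "openin X (\<Union>C)" using C by auto
    moreover have "G \<subseteq> \<Union>C" using C \<open>C \<noteq> {}\<close> by fastforce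
    ultimately show "\<Union>C \<in> ?A" by simp
  qed
  then obtain M where M: "openin X M" "G \<subseteq> M" "\<And>n. \<not> U n \<subseteq> M"
    and max: "\<And>Y. Y \<in> ?A \<Longrightarrow> M \<subseteq> Y \<Longrightarrow> Y = M"
    by auto
  have "\<exists>k. U k \<subseteq> M \<union> W" if "openin X W" "\<not> W \<subseteq> M" for W
  proof (rule ccontr)
    assume "\<nexists>k. U k \<subseteq> M \<union> W"
    then have "M \<union> W \<in> ?A" using M(1,2) that(1) by auto
    then show False using max[of "M \<union> W"] that(2) by auto
  qed
  with M show thesis using that by blast
qed

lemma compactin_upclosure_tail:
  assumes chain: "way_below_chain X U" and "openin X M"
    and grow: "\<And>W. openin X W \<Longrightarrow> \<not> W \<subseteq> M \<Longrightarrow> \<exists>k. U k \<subseteq> M \<union> W"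
    and a: "\<And>m. a m \<in> U m" "\<And>m. a m \<notin> M"
  shows "compactin X (upclosure X (a ` {n..}))"
proof (rule compactin_upclosure)
  show "a ` {n..} \<subseteq> topspace X"
    using a(1) openin_subset[OF way_below_chain_openin[OF chain]] by blast
  fix \<U> assume \<U>: "\<And>V. V \<in> \<U> \<Longrightarrow> openin X V" and cov: "a ` {n..} \<subseteq> \<Union>\<U>"
  have "openin X (\<Union>\<U>)" using \<U> by auto
  moreover have "\<not> \<Union>\<U> \<subseteq> M" using cov a(2)[of n] by auto
  ultimately obtain k where k: "U k \<subseteq> M \<union> \<Union>\<U>" using grow by blast
  \<comment> \<open>Past j the points a m lie in U (Suc j) - M, which finitely many members of \<U> cover.\<close>
  define j where "j = max k n"
  have "U j \<subseteq> \<Union>(insert M \<U>)"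
    using k way_below_chain_antimono[OF chain, of k j] by (auto simp: j_def)
  then obtain \<F> where \<F>: "finite \<F>" "\<F> \<subseteq> insert M \<U>" "U (Suc j) \<subseteq> \<Union>\<F>"
    using way_below_open_finite_subcover[OF way_below_chain_way_below[OF chain]] \<U> \<open>openin X M\<close>
    by (metis insert_iff)
  have "finite (a ` {n..j})" "a ` {n..j} \<subseteq> \<Union>\<U>" using cov by auto
  then obtain \<F>' where \<F>': "finite \<F>'" "\<F>' \<subseteq> \<U>" "a ` {n..j} \<subseteq> \<Union>\<F>'"
    by (rule finite_subset_Union)
  have "a ` {n..} \<subseteq> \<Union>((\<F> - {M}) \<union> \<F>')"
  proof
    fix y assume "y \<in> a ` {n..}"
    then obtain m where m: "n \<le> m" "y = a m" by auto
    show "y \<in> \<Union>((\<F> - {M}) \<union> \<F>')"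
    proof (cases "m \<le> j")
      case True
      then have "a m \<in> a ` {n..j}" using m(1) by simp
      then have "a m \<in> \<Union>\<F>'" by (rule subsetD[OF \<F>'(3)])
      then show ?thesis using m(2) by blast
    next
      case False
      then have "a m \<in> U (Suc j)" using a(1)[of m] way_below_chain_antimono[OF chain, of "Suc j" m] by auto
      then show ?thesis using m(2) \<F>(3) a(2)[of m] by auto
    qed
  qed
  moreover have "finite ((\<F> - {M}) \<union> \<F>')" using \<F>(1) \<F>'(1) by simp
  moreover have "(\<F> - {M}) \<union> \<F>' \<subseteq> \<U>" using \<F>(2) \<F>'(2) by blast
  ultimately show "\<exists>\<F>. finite \<F> \<and> \<F> \<subseteq> \<U> \<and> a ` {n..} \<subseteq> \<Union>\<F>"
    by (intro exI[of _ "(\<F> - {M}) \<union> \<F>'"] conjI)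
qed

lemma well_filtered_way_below_chain_subset:
  assumes wf: "well_filtered X" and chain: "way_below_chain X U"
    and G: "openin X G" "\<Inter>(range U) \<subseteq> G"
  shows "\<exists>n. U n \<subseteq> G"
proof (rule ccontr)
  assume "\<nexists>n. U n \<subseteq> G"
  then have "\<And>n. \<not> U n \<subseteq> G" by blast
  then obtain M where M: "openin X M" "G \<subseteq> M" "\<And>n. \<not> U n \<subseteq> M"
    and grow: "\<And>W. openin X W \<Longrightarrow> \<not> W \<subseteq> M \<Longrightarrow> \<exists>k. U k \<subseteq> M \<union> W"
    using way_below_chain_maximal_open[OF chain G(1)] by metis
  have "\<forall>n. \<exists>x. x \<in> U n \<and> x \<notin> M" using M(3) by blast
  then obtain a where a: "\<And>n. a n \<in> U n" "\<And>n. a n \<notin> M" by metis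
  define K where "K n = upclosure X (a ` {n..})" for n
  have a_top: "a ` {n..} \<subseteq> topspace X" for n
    using a(1) openin_subset[OF way_below_chain_openin[OF chain]] by blast
  have aK: "a n \<in> K n" for n
    using subset_upclosure[OF a_top] unfolding K_def by blast
  have K_U: "K n \<subseteq> U n" for n
    unfolding K_def using a(1) way_below_chain_antimono[OF chain]
    by (intro upclosure_subset_openin way_below_chain_openin[OF chain]) blast
  have "K n \<in> KX X" for n
    using aK[of n] compactin_upclosure_tail[OF chain M(1) grow a] saturated_upclosure
    unfolding KX_def K_def by auto
  then have "range K \<subseteq> KX X" by blast
  moreover have "filtered_incl (range K)"
    unfolding filtered_incl_def
  proof (intro conjI ballI)
    fix A B assume "A \<in> range K" "B \<in> range K"
    then obtain i j where "A = K i" "B = K j" by blast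
    moreover have "K (max i j) \<subseteq> K i" "K (max i j) \<subseteq> K j"
      unfolding K_def upclosure_def by auto
    ultimately show "\<exists>C\<in>range K. C \<subseteq> A \<and> C \<subseteq> B" by blast
  qed simp
  moreover have "\<Inter>(range K) \<subseteq> G"
    using INF_mono'[of K U UNIV, OF K_U] G(2) by simp
  ultimately have "\<exists>C\<in>range K. C \<subseteq> G"
    by (rule well_filteredD[OF wf G(1)])
  then obtain n where "K n \<subseteq> G" by blast
  then show False using aK[of n] a(2)[of n] M(2) by blast
qed

lemma compactin_Inter_way_below_chain:
  assumes wf: "well_filtered X" and chain: "way_below_chain X U"
  shows "compactin X (\<Inter>(range U))"
  unfolding compactin_def
proof (intro conjI allI impI)
  show "\<Inter>(range U) \<subseteq> topspace X"
    using openin_subset[OF way_below_chain_openin[OF chain, of 0]] by blast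
  fix \<U> assume \<U>: "(\<forall>V\<in>\<U>. openin X V) \<and> \<Inter>(range U) \<subseteq> \<Union>\<U>"
  then have "openin X (\<Union>\<U>)" by auto
  then obtain n where "U n \<subseteq> \<Union>\<U>"
    using well_filtered_way_below_chain_subset[OF wf chain] \<U> by blast
  then obtain \<F> where \<F>: "finite \<F>" "\<F> \<subseteq> \<U>" "U (Suc n) \<subseteq> \<Union>\<F>"
    using way_below_open_finite_subcover[OF way_below_chain_way_below[OF chain]] \<U> by metis
  moreover have "\<Inter>(range U) \<subseteq> U (Suc n)" by blast
  ultimately show "\<exists>\<F>. finite \<F> \<and> \<F> \<subseteq> \<U> \<and> \<Inter>(range U) \<subseteq> \<Union>\<F>"
    by (intro exI[of _ \<F>] conjI) auto
qed

definition compact_nbhds :: "'a topology \<Rightarrow> 'a set \<Rightarrow> 'a set set" where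
  "compact_nbhds X K = {Q \<in> KX X. \<exists>P. openin X P \<and> K \<subseteq> P \<and> P \<subseteq> Q}"

lemma core_compact_well_filtered_compact_nbhds:
  assumes cc: "core_compact X" and wf: "well_filtered X"
    and K: "K \<in> KX X" and V: "openin X V" "K \<subseteq> V"
  shows "\<exists>Q\<in>compact_nbhds X K. Q \<subseteq> V"
proof -
  have "compactin X K" "K \<noteq> {}" using K unfolding KX_def by simp_all
  then obtain P where P: "openin X P" "K \<subseteq> P" "way_below_open X P V"
    using core_compact_compactin_way_below[OF cc _ V] by blast
  obtain U where chain: "way_below_chain X U" and "U 0 = V" and PU: "\<And>n. way_below_open X P (U n)"
    using core_compact_way_below_chain[OF cc V(1) P(3)] by blast
  have "P \<subseteq> \<Inter>(range U)"
    using way_below_open_subset[OF way_below_chain_openin[OF chain] PU] by blast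
  moreover have "\<Inter>(range U) \<subseteq> V" using \<open>U 0 = V\<close> by blast
  moreover have "\<Inter>(range U) \<in> KX X"
    unfolding KX_def
  proof (intro CollectI conjI)
    show "\<Inter>(range U) \<noteq> {}" using \<open>K \<noteq> {}\<close> P(2) \<open>P \<subseteq> \<Inter>(range U)\<close> by blast
    show "compactin X (\<Inter>(range U))" using wf chain by (rule compactin_Inter_way_below_chain)
    show "saturated X (\<Inter>(range U))"
      using saturated_openin[OF way_below_chain_openin[OF chain]] by (intro saturated_Inter) auto
  qed
  ultimately show ?thesis using P(1,2) unfolding compact_nbhds_def by blast
qed

section \<open>Scott and upper Vietoris topologies on K(X)\<close>

lemma well_filtered_Inter_KX:
  assumes wf: "well_filtered X" and "\<K> \<subseteq> KX X" "filtered_incl \<K>"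
  shows "\<Inter>\<K> \<in> KX X"
  unfolding KX_def
proof (intro CollectI conjI)
  have ne: "\<K> \<noteq> {}" using assms(3) unfolding filtered_incl_def by simp
  have K: "\<And>K. K \<in> \<K> \<Longrightarrow> K \<noteq> {} \<and> compactin X K \<and> saturated X K"
    using assms(2) unfolding KX_def by blast
  show "\<Inter>\<K> \<noteq> {}"
  proof
    assume "\<Inter>\<K> = {}"
    then have "\<exists>K\<in>\<K>. K \<subseteq> {}" by (intro well_filteredD[OF wf openin_empty assms(2,3)]) simp
    then show False using K by blast
  qed
  show "compactin X (\<Inter>\<K>)"
    unfolding compactin_def
  proof (intro conjI allI impI)
    show "\<Inter>\<K> \<subseteq> topspace X" using ne K compactin_subset_topspace by blast
    fix \<U> assume \<U>: "(\<forall>U\<in>\<U>. openin X U) \<and> \<Inter>\<K> \<subseteq> \<Union>\<U>"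
    then have "\<exists>K\<in>\<K>. K \<subseteq> \<Union>\<U>"
      by (intro well_filteredD[OF wf _ assms(2,3)]) auto
    then obtain K where "K \<in> \<K>" "K \<subseteq> \<Union>\<U>" by blast
    then obtain \<F> where "finite \<F>" "\<F> \<subseteq> \<U>" "K \<subseteq> \<Union>\<F>"
      using compactinD[of X K \<U>] K \<U> by blast
    moreover have "\<Inter>\<K> \<subseteq> K" using \<open>K \<in> \<K>\<close> by blast
    ultimately show "\<exists>\<F>. finite \<F> \<and> \<F> \<subseteq> \<U> \<and> \<Inter>\<K> \<subseteq> \<Union>\<F>"
      by (intro exI[of _ \<F>] conjI) auto
  qed
  show "saturated X (\<Inter>\<K>)" using ne K by (intro saturated_Inter) auto
qed

lemma directed_in_K_le_filtered_incl:
  "directed_in (KX X) K_le \<D> \<Longrightarrow> filtered_incl \<D>"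
  unfolding directed_in_def filtered_incl_def K_le_def by simp

lemma well_filtered_sup_KX:
  assumes wf: "well_filtered X"
    and D: "directed_in (KX X) K_le \<D>" and s: "is_sup_in (KX X) K_le \<D> s"
  shows "s = \<Inter>\<D>"
proof -
  have "\<D> \<subseteq> KX X" using D unfolding directed_in_def by simp
  then have "\<Inter>\<D> \<in> KX X"
    using well_filtered_Inter_KX[OF wf _ directed_in_K_le_filtered_incl[OF D]] by simp
  then have "\<Inter>\<D> \<subseteq> s" using s unfolding is_sup_in_def K_le_def by blast
  moreover have "s \<subseteq> \<Inter>\<D>" using s unfolding is_sup_in_def K_le_def by blast
  ultimately show ?thesis by blast
qed

lemma scott_open_Box:
  assumes wf: "well_filtered X" and "openin X U"
  shows "scott_open (KX X) K_le (Box X U)"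
  unfolding scott_open_def
proof (intro conjI allI impI ballI)
  show "Box X U \<subseteq> KX X" unfolding Box_def by blast
  show "y \<in> Box X U" if "x \<in> Box X U" "y \<in> KX X" "K_le x y" for x y
    using that unfolding Box_def K_le_def by blast
  fix \<D> s assume "directed_in (KX X) K_le \<D> \<and> is_sup_in (KX X) K_le \<D> s \<and> s \<in> Box X U"
  then have D: "directed_in (KX X) K_le \<D>" and "s = \<Inter>\<D>" "s \<subseteq> U"
    using well_filtered_sup_KX[OF wf] unfolding Box_def by blast+
  then have "\<exists>K\<in>\<D>. K \<subseteq> U"
    using well_filteredD[OF wf assms(2) _ directed_in_K_le_filtered_incl[OF D]] D
    unfolding directed_in_def by blast
  then show "\<D> \<inter> Box X U \<noteq> {}"
    using D unfolding directed_in_def Box_def by blast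
qed

lemma scott_open_Union:
  "(\<And>W. W \<in> \<W> \<Longrightarrow> scott_open P le W) \<Longrightarrow> scott_open P le (\<Union>\<W>)"
  unfolding scott_open_def by blast

lemma upper_vietoris_open_imp_scott_open:
  assumes "well_filtered X" "upper_vietoris_open X W"
  shows "scott_open (KX X) K_le W"
proof -
  obtain \<B> where \<B>: "\<B> \<subseteq> {Box X U | U. openin X U}" "W = \<Union>\<B>"
    using assms(2) unfolding upper_vietoris_open_def by blast
  have "scott_open (KX X) K_le B" if "B \<in> \<B>" for B
    using \<B>(1) that scott_open_Box[OF assms(1)] by blast
  then show ?thesis unfolding \<B>(2) by (rule scott_open_Union)
qed

lemma directed_in_compact_nbhds:
  assumes nbhd: "\<And>V. openin X V \<Longrightarrow> K \<subseteq> V \<Longrightarrow> \<exists>Q\<in>compact_nbhds X K. Q \<subseteq> V"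
    and "K \<subseteq> topspace X"
  shows "directed_in (KX X) K_le (compact_nbhds X K)"
  unfolding directed_in_def K_le_def
proof (intro conjI ballI)
  show "compact_nbhds X K \<subseteq> KX X" unfolding compact_nbhds_def by blast
  show "compact_nbhds X K \<noteq> {}" using nbhd[OF openin_topspace assms(2)] by blast
  fix Q1 Q2 assume "Q1 \<in> compact_nbhds X K" "Q2 \<in> compact_nbhds X K"
  then obtain P1 P2 where P: "openin X P1" "K \<subseteq> P1" "P1 \<subseteq> Q1" "openin X P2" "K \<subseteq> P2" "P2 \<subseteq> Q2"
    unfolding compact_nbhds_def by blast
  then obtain Q where "Q \<in> compact_nbhds X K" "Q \<subseteq> P1 \<inter> P2"
    using nbhd[of "P1 \<inter> P2"] by blast
  then show "\<exists>Q\<in>compact_nbhds X K. Q \<subseteq> Q1 \<and> Q \<subseteq> Q2" using P(3,6) by blast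
qed

lemma is_sup_in_compact_nbhds:
  assumes nbhd: "\<And>V. openin X V \<Longrightarrow> K \<subseteq> V \<Longrightarrow> \<exists>Q\<in>compact_nbhds X K. Q \<subseteq> V"
    and K: "K \<in> KX X"
  shows "is_sup_in (KX X) K_le (compact_nbhds X K) K"
  unfolding is_sup_in_def K_le_def
proof (intro conjI ballI impI)
  show "K \<in> KX X" by (rule K)
  show "K \<subseteq> Q" if "Q \<in> compact_nbhds X K" for Q
    using that unfolding compact_nbhds_def by blast
  fix L assume L: "L \<in> KX X" "\<forall>Q\<in>compact_nbhds X K. L \<subseteq> Q"
  show "L \<subseteq> K"
  proof
    fix x assume "x \<in> L"
    then have x: "x \<in> topspace X" using L(1) unfolding KX_def compactin_def by blast
    show "x \<in> K"
    proof (rule ccontr)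
      assume "x \<notin> K"
      moreover have "saturated X K" using K unfolding KX_def by blast
      ultimately have "K \<subseteq> topspace X - X closure_of {x}"
        using x by (simp add: saturated_subset_closure_compl)
      moreover have "openin X (topspace X - X closure_of {x})" by (simp add: openin_diff)
      ultimately obtain Q where "Q \<in> compact_nbhds X K" "Q \<subseteq> topspace X - X closure_of {x}"
        using nbhd by blast
      moreover have "x \<in> X closure_of {x}" using spec_le_refl[OF x] unfolding spec_le_def .
      ultimately show False using L(2) \<open>x \<in> L\<close> by blast
    qed
  qed
qed

lemma scott_open_imp_upper_vietoris_open:
  assumes nbhd: "\<And>K V. K \<in> KX X \<Longrightarrow> openin X V \<Longrightarrow> K \<subseteq> V \<Longrightarrow> \<exists>Q\<in>compact_nbhds X K. Q \<subseteq> V"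
    and W: "scott_open (KX X) K_le W"
  shows "upper_vietoris_open X W"
proof -
  let ?\<B> = "{Box X P | P. openin X P \<and> Box X P \<subseteq> W}"
  have "W \<subseteq> \<Union>?\<B>"
  proof
    fix K assume "K \<in> W"
    then have K: "K \<in> KX X" using W unfolding scott_open_def by blast
    then have "K \<subseteq> topspace X" unfolding KX_def compactin_def by blast
    then have "compact_nbhds X K \<inter> W \<noteq> {}"
      using W directed_in_compact_nbhds is_sup_in_compact_nbhds nbhd K \<open>K \<in> W\<close>
      unfolding scott_open_def by meson
    then obtain Q P where Q: "Q \<in> KX X" "Q \<in> W" and P: "openin X P" "K \<subseteq> P" "P \<subseteq> Q"
      unfolding compact_nbhds_def by blast
    have "Box X P \<subseteq> W"
      using W Q P(3) unfolding scott_open_def Box_def K_le_def by blast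
    then have "Box X P \<in> ?\<B>" using P(1) by blast
    moreover have "K \<in> Box X P" using K P(2) unfolding Box_def by blast
    ultimately show "K \<in> \<Union>?\<B>" by (rule UnionI)
  qed
  moreover have "\<Union>?\<B> \<subseteq> W" by auto
  ultimately have "W = \<Union>?\<B>" by (rule antisym)
  moreover have "?\<B> \<subseteq> {Box X U | U. openin X U}" by auto
  ultimately show ?thesis unfolding upper_vietoris_open_def by auto
qed

theorem mainTheorem18:
  fixes X :: "'a topology"
  assumes "t0_space X" and "core_compact X" and "well_filtered X"
  shows "\<forall>W. upper_vietoris_open X W \<longleftrightarrow> scott_open (KX X) K_le W"
proof (intro allI iffI)
  fix W
  show "scott_open (KX X) K_le W" if "upper_vietoris_open X W"
    using upper_vietoris_open_imp_scott_open[OF assms(3) that] .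
  show "upper_vietoris_open X W" if "scott_open (KX X) K_le W"
    using scott_open_imp_upper_vietoris_open
      core_compact_well_filtered_compact_nbhds[OF assms(2,3)] that by blast
qed

end
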